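(* Let $\sigma:\Delta_d\to\mathbb{R}^N$ be continuous and of class $C^1$ on every open face of $\Delta_d$. If $\sigma$ has finite volume, then so does its cone $\hat\sigma:\Delta_{d+1}\to\mathbb{R}^N$.
   Context: The standard $d$-simplex is $\Delta_d=\{(a_1,\dots,a_d)\in\mathbb{R}^d\mid a_i\ge 0,\ \sum a_i\le 1\}$; points of $\Delta_{d+1}$ are written $(a_0,a_1,\dots,a_d)$. An open face is the interior of a face of any dimension. A map $\tau:\Delta_e\to\mathbb{R}^N$ which is continuous and $C^1$ on open faces has finite volume if $\int_{\Delta_e}\tau^*(\omega)$ (the pull-back being defined on the interior) converges absolutely for every continuous $e$-form $\omega$ on $\tau(\Delta_e)$. The cone of $\sigma$ is $\hat\sigma(a_0,\dots,a_d)=A\,\sigma(a_1/A,\dots,a_d/A)$ where $A=\sum_{i=0}^d a_i$, if $A\neq 0$, and $\hat\sigma(0)=0$; it is continuous and $C^1$ on all open faces of $\Delta_{d+1}$. *)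

theory Defs
  imports "HOL-Analysis.Analysis"
begin

text \<open>The standard simplex on a finite index type 'd (so d = CARD('d)).
  For Delta_{d+1} we use the index type 'd option, coordinate None being a_0.\<close>
definition std_simplex :: "(real ^ 'd::finite) set" where
  "std_simplex = {a. (\<forall>i. 0 \<le> a $ i) \<and> (\<Sum>i\<in>UNIV. a $ i) \<le> 1}"

definition C1_on :: "('a::real_normed_vector \<Rightarrow> 'b::real_normed_vector) \<Rightarrow> 'a set \<Rightarrow> bool" where
  "C1_on f U \<longleftrightarrow> (\<exists>D::'a \<Rightarrow> ('a \<Rightarrow>\<^sub>L 'b).
      (\<forall>x\<in>U. (f has_derivative blinfun_apply (D x)) (at x within U)) \<and> continuous_on U D)"

definition C1_on_open_faces :: "(real ^ 'e::finite \<Rightarrow> real ^ 'n::finite) \<Rightarrow> bool" where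
  "C1_on_open_faces \<tau> \<longleftrightarrow>
     (\<forall>F. F face_of (std_simplex :: (real ^ 'e) set) \<and> F \<noteq> {} \<longrightarrow> C1_on \<tau> (rel_interior F))"

definition alt_multilinear :: "(('e::finite \<Rightarrow> 'v::real_vector) \<Rightarrow> real) \<Rightarrow> bool" where
  "alt_multilinear \<phi> \<longleftrightarrow>
     (\<forall>vs k. linear (\<lambda>v. \<phi> (vs(k := v)))) \<and>
     (\<forall>vs i j. i \<noteq> j \<and> vs i = vs j \<longrightarrow> \<phi> vs = 0)"

definition continuous_form ::
    "(real ^ 'n::finite) set \<Rightarrow> (real ^ 'n \<Rightarrow> ('e::finite \<Rightarrow> real ^ 'n) \<Rightarrow> real) \<Rightarrow> bool" where
  "continuous_form S w \<longleftrightarrow>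
     (\<forall>x\<in>S. alt_multilinear (w x)) \<and> (\<forall>vs. continuous_on S (\<lambda>x. w x vs))"

text \<open>Coefficient of the pull-back tau^* w with respect to da_1 ... da_e at a point a
  of the interior: w(tau a)(d_1 tau(a), ..., d_e tau(a)).\<close>
definition pullback_density ::
    "(real ^ 'e::finite \<Rightarrow> real ^ 'n::finite) \<Rightarrow> (real ^ 'n \<Rightarrow> ('e \<Rightarrow> real ^ 'n) \<Rightarrow> real)
      \<Rightarrow> real ^ 'e \<Rightarrow> real" where
  "pullback_density \<tau> w a = w (\<tau> a) (\<lambda>k. frechet_derivative \<tau> (at a) (axis k 1))"

definition finite_volume :: "(real ^ 'e::finite \<Rightarrow> real ^ 'n::finite) \<Rightarrow> bool" where
  "finite_volume \<tau> \<longleftrightarrow>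
     (\<forall>w :: real ^ 'n \<Rightarrow> ('e \<Rightarrow> real ^ 'n) \<Rightarrow> real.
        continuous_form (\<tau> ` std_simplex) w \<longrightarrow>
        pullback_density \<tau> w absolutely_integrable_on interior (std_simplex :: (real ^ 'e) set))"

definition simplex_cone :: "(real ^ 'd::finite \<Rightarrow> real ^ 'n::finite) \<Rightarrow> real ^ ('d option) \<Rightarrow> real ^ 'n" where
  "simplex_cone \<sigma> a = (let A = (\<Sum>i\<in>UNIV. a $ i) in
     if A \<noteq> 0 then A *\<^sub>R \<sigma> (\<chi> i. a $ Some i / A) else 0)"

end

theory Submission
  imports Defs
begin

(*
  On the open simplex the cone is A sigma(b), where A = a_0 + ... + a_d and b = (a_1, ..., a_d) / A.
  If L is the derivative of sigma at b, the k-th partial derivative of the cone is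
  sigma(b) - L b + L e_k (with e_0 = 0), so the pull-back density of an alternating form w is
  w(sigma(b), L e_1, ..., L e_d).  Expanding the first argument in coordinates and the remaining
  ones by minors writes it as a sum of terms c(a) M_g(b), where c is bounded and continuous and
  M_g = det (d_k sigma_(g j)) is the pull-back density of sigma for a constant coordinate form,
  hence integrable over the open d-simplex by hypothesis.  Finally a |-> M_g(b) is integrable over
  the open (d+1)-simplex, because the substitution a = A (1 - sum b, b) has Jacobian A^d <= 1.
*)

section \<open>Alternating multilinear forms\<close>

lemma alt_multilinear_linear: "alt_multilinear \<phi> \<Longrightarrow> linear (\<lambda>v. \<phi> (vs(k := v)))"
  unfolding alt_multilinear_def by blast

lemma alt_multilinear_eq_0: "alt_multilinear \<phi> \<Longrightarrow> i \<noteq> j \<Longrightarrow> vs i = vs j \<Longrightarrow> \<phi> vs = 0"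
  unfolding alt_multilinear_def by blast

lemma alt_multilinear_update_add:
  "alt_multilinear \<phi> \<Longrightarrow> \<phi> (vs(k := u + v)) = \<phi> (vs(k := u)) + \<phi> (vs(k := v))"
  using linear_add[OF alt_multilinear_linear] by blast

lemma alt_multilinear_update_diff:
  "alt_multilinear \<phi> \<Longrightarrow> \<phi> (vs(k := u - v)) = \<phi> (vs(k := u)) - \<phi> (vs(k := v))"
  using linear_diff[OF alt_multilinear_linear] by blast

lemma alt_multilinear_update_sum:
  "alt_multilinear \<phi> \<Longrightarrow> \<phi> (vs(k := (\<Sum>j\<in>J. c j *\<^sub>R u j))) = (\<Sum>j\<in>J. c j * \<phi> (vs(k := u j)))"
proof -
  assume am: "alt_multilinear \<phi>"
  have "\<phi> (vs(k := (\<Sum>j\<in>J. c j *\<^sub>R u j))) = (\<Sum>j\<in>J. \<phi> (vs(k := c j *\<^sub>R u j)))"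
    using linear_sum[OF alt_multilinear_linear[OF am]] by blast
  then show ?thesis
    using linear_scale[OF alt_multilinear_linear[OF am]] by simp
qed

lemma alt_multilinear_update_axis_expansion:
  fixes \<phi> :: "('e::finite \<Rightarrow> real^'n::finite) \<Rightarrow> real"
  assumes "alt_multilinear \<phi>"
  shows "\<phi> (vs(k := x)) = (\<Sum>j\<in>UNIV. x $ j * \<phi> (vs(k := axis j 1)))"
proof -
  have "x = (\<Sum>j\<in>UNIV. x $ j *\<^sub>R axis j 1)"
    using basis_expansion[of x] by (simp add: scalar_mult_eq_scaleR)
  then show ?thesis
    using alt_multilinear_update_sum[OF assms, of vs k "\<lambda>j. x $ j" "\<lambda>j. axis j 1" UNIV] by simp
qed

lemma alt_multilinear_expansion_on:
  fixes \<phi> :: "('e::finite \<Rightarrow> real^'n::finite) \<Rightarrow> real"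
  assumes am: "alt_multilinear \<phi>" and "finite T"
  shows "\<phi> (\<lambda>k. if k \<in> T then v k else c k) =
    (\<Sum>g\<in>T \<rightarrow>\<^sub>E UNIV. (\<Prod>k\<in>T. v k $ g k) * \<phi> (\<lambda>k. if k \<in> T then axis (g k) 1 else c k))"
  using \<open>finite T\<close>
proof (induction T arbitrary: c rule: finite_induct)
  case empty
  then show ?case by simp
next
  case (insert x T)
  let ?e = "\<lambda>g k. if k \<in> T then axis (g k) (1::real) else c k"
  have upd: "(\<lambda>k. if k \<in> T then axis (g k) 1 else (c(x := u)) k) = (?e g)(x := u)" for g u
    using insert.hyps by auto
  have "\<phi> (\<lambda>k. if k \<in> insert x T then v k else c k) = \<phi> (\<lambda>k. if k \<in> T then v k else (c(x := v x)) k)"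
    by (rule arg_cong[where f = \<phi>]) auto
  also have "\<dots> = (\<Sum>g\<in>T \<rightarrow>\<^sub>E UNIV. (\<Prod>k\<in>T. v k $ g k) * \<phi> ((?e g)(x := v x)))"
    unfolding insert.IH upd ..
  also have "\<dots> = (\<Sum>g\<in>T \<rightarrow>\<^sub>E UNIV. \<Sum>j\<in>UNIV. (\<Prod>k\<in>T. v k $ g k) * (v x $ j * \<phi> ((?e g)(x := axis j 1))))"
    by (intro sum.cong refl) (subst alt_multilinear_update_axis_expansion[OF am], simp add: sum_distrib_left)
  also have "\<dots> = (\<Sum>(g, j)\<in>(T \<rightarrow>\<^sub>E UNIV) \<times> UNIV. (\<Prod>k\<in>T. v k $ g k) * (v x $ j * \<phi> ((?e g)(x := axis j 1))))"
    by (simp add: sum.cartesian_product)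
  also have "\<dots> = (\<Sum>g\<in>insert x T \<rightarrow>\<^sub>E UNIV. (\<Prod>k\<in>insert x T. v k $ g k) *
                    \<phi> (\<lambda>k. if k \<in> insert x T then axis (g k) 1 else c k))"
  proof (rule sum.reindex_bij_witness[of _ "\<lambda>g. (g(x := undefined), g x)" "\<lambda>(g, j). g(x := j)"])
    fix a :: "('e \<Rightarrow> 'n) \<times> 'n" assume a: "a \<in> (T \<rightarrow>\<^sub>E UNIV) \<times> UNIV"
    obtain g j where gj: "a = (g, j)" by (cases a)
    have gx: "g x = undefined" using a gj insert.hyps by (auto simp: PiE_def extensional_def)
    show "(case a of (g, j) \<Rightarrow> g(x := j)) \<in> insert x T \<rightarrow>\<^sub>E UNIV"
      using a gj by (auto simp: PiE_def extensional_def)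
    show "(\<lambda>g. (g(x := undefined), g x)) (case a of (g, j) \<Rightarrow> g(x := j)) = a"
      using gj gx by auto
    have "(\<Prod>k\<in>T. v k $ (g(x := j)) k) = (\<Prod>k\<in>T. v k $ g k)"
      using insert.hyps by (intro prod.cong) auto
    then have prod: "(\<Prod>k\<in>insert x T. v k $ (g(x := j)) k) = v x $ j * (\<Prod>k\<in>T. v k $ g k)"
      using insert.hyps by simp
    have args: "(\<lambda>k. if k \<in> insert x T then axis ((g(x := j)) k) 1 else c k) = (?e g)(x := axis j 1)"
      using insert.hyps by auto
    show "(\<Prod>k\<in>insert x T. v k $ (case a of (g, j) \<Rightarrow> g(x := j)) k) *
          \<phi> (\<lambda>k. if k \<in> insert x T then axis ((case a of (g, j) \<Rightarrow> g(x := j)) k) 1 else c k) =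
         (case a of (g, j) \<Rightarrow> (\<Prod>k\<in>T. v k $ g k) * (v x $ j * \<phi> ((?e g)(x := axis j 1))))"
      unfolding gj prod.case prod args by (simp add: mult_ac)
  next
    fix g :: "'e \<Rightarrow> 'n" assume g: "g \<in> insert x T \<rightarrow>\<^sub>E UNIV"
    show "(\<lambda>g. (g(x := undefined), g x)) g \<in> (T \<rightarrow>\<^sub>E UNIV) \<times> UNIV"
      using g insert.hyps by (auto simp: PiE_def extensional_def)
    show "(case (\<lambda>g. (g(x := undefined), g x)) g of (g, j) \<Rightarrow> g(x := j)) = g"
      by auto
  qed
  finally show ?case .
qed

lemma alt_multilinear_expansion:
  fixes \<phi> :: "('e::finite \<Rightarrow> real^'n::finite) \<Rightarrow> real"
  assumes "alt_multilinear \<phi>"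
  shows "\<phi> v = (\<Sum>g\<in>UNIV. (\<Prod>k\<in>UNIV. v k $ g k) * \<phi> (\<lambda>k. axis (g k) 1))"
  using alt_multilinear_expansion_on[OF assms, of UNIV v v] by simp

lemma alt_multilinear_swap:
  assumes am: "alt_multilinear \<phi>" and "i \<noteq> j"
  shows "\<phi> (v \<circ> Transposition.transpose i j) = - \<phi> v"
proof -
  let ?u = "v i + v j"
  have "0 = \<phi> (v(i := ?u, j := ?u))"
    using \<open>i \<noteq> j\<close> by (intro alt_multilinear_eq_0[OF am, of i j, symmetric]) auto
  also have "\<dots> = \<phi> (v(j := v i, i := ?u)) + \<phi> (v(i := ?u))"
    using \<open>i \<noteq> j\<close> by (simp add: alt_multilinear_update_add[OF am] fun_upd_twist)
  also have "\<dots> = \<phi> (v(j := v i, i := v j)) + \<phi> v"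
    using \<open>i \<noteq> j\<close>
    by (simp add: alt_multilinear_update_add[OF am] alt_multilinear_eq_0[OF am, of i j])
  finally have "\<phi> (v(j := v i, i := v j)) = - \<phi> v"
    by linarith
  moreover have "v(j := v i, i := v j) = v \<circ> Transposition.transpose i j"
    using \<open>i \<noteq> j\<close> by (auto simp: Transposition.transpose_def)
  ultimately show ?thesis by simp
qed

lemma alt_multilinear_permute:
  fixes \<phi> :: "('e::finite \<Rightarrow> 'v::real_vector) \<Rightarrow> real"
  assumes am: "alt_multilinear \<phi>" and "p permutes (UNIV :: 'e set)"
  shows "\<phi> (v \<circ> p) = of_int (sign p) * \<phi> v"
  using \<open>p permutes UNIV\<close> finite_class.finite_UNIV
proof (induction p arbitrary: v rule: permutes_induct)
  case id
  then show ?case by simp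
next
  case (swap a b p)
  have "permutation p"
    using swap.hyps by (simp add: permutes_imp_permutation)
  then have "sign (Transposition.transpose a b \<circ> p) = - sign p"
    using \<open>a \<noteq> b\<close> by (simp add: sign_compose permutation_swap_id sign_swap_id)
  have "\<phi> (v \<circ> (Transposition.transpose a b \<circ> p)) = of_int (sign p) * \<phi> (v \<circ> Transposition.transpose a b)"
    using swap.IH[of "v \<circ> Transposition.transpose a b"] by (simp only: comp_assoc)
  also have "\<dots> = of_int (sign (Transposition.transpose a b \<circ> p)) * \<phi> v"
    using alt_multilinear_swap[OF am \<open>a \<noteq> b\<close>] \<open>sign (Transposition.transpose a b \<circ> p) = - sign p\<close>
    by simp
  finally show ?case .
qed

definition coordinate_minor :: "('e \<Rightarrow> 'n) \<Rightarrow> ('e::finite \<Rightarrow> real^'n::finite) \<Rightarrow> real" where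
  "coordinate_minor g vs = det (\<chi> k j. vs k $ g j)"

lemma alt_multilinear_coordinate_minor:
  fixes g :: "'e::finite \<Rightarrow> 'n::finite"
  shows "alt_multilinear (coordinate_minor g)"
  unfolding alt_multilinear_def
proof (intro conjI allI impI)
  fix vs :: "'e \<Rightarrow> real^'n" and k
  let ?row = "\<lambda>v::real^'n. \<chi> j. v $ g j"
  have rows: "(\<chi> i j. (vs(k := v)) i $ g j) = (\<chi> i. if i = k then ?row v else ?row (vs i))" for v
    by (simp add: vec_eq_iff)
  have row_add: "?row (u + v) = ?row u + ?row v" and row_scale: "?row (c *\<^sub>R u) = c *s ?row u"
    for u v c by (simp_all add: vec_eq_iff)
  show "linear (\<lambda>v. coordinate_minor g (vs(k := v)))"
    unfolding coordinate_minor_def rows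
    by (intro linearI) (simp_all only: row_add row_scale det_row_add det_row_mul real_scaleR_def)
next
  fix vs :: "'e \<Rightarrow> real^'n" and i j
  assume "i \<noteq> j \<and> vs i = vs j"
  then show "coordinate_minor g vs = 0"
    unfolding coordinate_minor_def by (intro det_identical_rows[of i j]) (auto simp: row_def vec_eq_iff)
qed

lemma alt_multilinear_minor_expansion:
  fixes \<phi> :: "('e::finite \<Rightarrow> real^'n::finite) \<Rightarrow> real"
  assumes am: "alt_multilinear \<phi>"
  shows "fact CARD('e) * \<phi> v = (\<Sum>g\<in>UNIV. \<phi> (\<lambda>k. axis (g k) 1) * coordinate_minor g v)"
proof -
  let ?P = "{p. p permutes (UNIV :: 'e set)}"
  let ?E = "\<lambda>g::'e \<Rightarrow> 'n. \<lambda>k. axis (g k) (1::real)"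
  have permuted: "(\<Sum>g\<in>UNIV. \<phi> (?E g) * (\<Prod>k\<in>UNIV. v k $ g (p k))) = of_int (sign p) * \<phi> v"
    if p: "p permutes (UNIV :: 'e set)" for p
  proof -
    have "(\<Sum>g\<in>UNIV. \<phi> (?E g) * (\<Prod>k\<in>UNIV. v k $ g (p k))) =
          (\<Sum>h\<in>UNIV. \<phi> (?E h \<circ> inv p) * (\<Prod>k\<in>UNIV. v k $ h k))"
      by (rule sum.reindex_bij_witness[of _ "\<lambda>h. h \<circ> inv p" "\<lambda>g. g \<circ> p"])
         (auto simp: permutes_inverses[OF p] o_def)
    also have "\<dots> = (\<Sum>h\<in>UNIV. of_int (sign p) * (\<phi> (?E h) * (\<Prod>k\<in>UNIV. v k $ h k)))"
      using alt_multilinear_permute[OF am permutes_inv[OF p]] p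
      by (simp add: sign_inverse permutes_imp_permutation mult.assoc)
    also have "\<dots> = of_int (sign p) * \<phi> v"
      by (subst alt_multilinear_expansion[OF am, of v]) (simp add: sum_distrib_left mult_ac)
    finally show ?thesis .
  qed
  have "(\<Sum>g\<in>UNIV. \<phi> (?E g) * coordinate_minor g v) =
        (\<Sum>p\<in>?P. of_int (sign p) * (\<Sum>g\<in>UNIV. \<phi> (?E g) * (\<Prod>k\<in>UNIV. v k $ g (p k))))"
    unfolding coordinate_minor_def det_def sum_distrib_left
    by (subst sum.swap) (simp add: mult_ac)
  also have "\<dots> = (\<Sum>p\<in>?P. \<phi> v)"
    by (intro sum.cong refl) (simp add: permuted mult.assoc[symmetric] of_int_mult[symmetric])
  also have "\<dots> = fact CARD('e) * \<phi> v"
    by (simp add: card_permutations)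
  finally show ?thesis ..
qed

lemma alt_multilinear_add_to_all:
  assumes am: "alt_multilinear \<phi>" and "c z = 0"
  shows "\<phi> (\<lambda>k. u + c k) = \<phi> (c(z := u))"
proof -
  have shift: "\<phi> (\<lambda>k. if k \<in> T then c k else u + c k) = \<phi> (\<lambda>k. u + c k)"
    if "finite T" "z \<notin> T" for T
    using that
  proof (induction T rule: finite_induct)
    case (insert x T)
    let ?vs = "\<lambda>k. if k \<in> T then c k else u + c k"
    have "x \<noteq> z" using insert by auto
    have "\<phi> (?vs(x := u)) = 0"
      using \<open>x \<noteq> z\<close> \<open>c z = 0\<close> insert.prems
      by (intro alt_multilinear_eq_0[OF am \<open>x \<noteq> z\<close>]) auto
    moreover have "\<phi> ?vs = \<phi> (?vs(x := u)) + \<phi> (?vs(x := c x))"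
    proof -
      have "?vs = ?vs(x := u + c x)"
        using insert by auto
      then show ?thesis
        by (metis alt_multilinear_update_add[OF am])
    qed
    moreover have "(\<lambda>k. if k \<in> insert x T then c k else u + c k) = ?vs(x := c x)"
      using insert by auto
    ultimately show ?case
      using insert by simp
  qed simp
  have "(\<lambda>k. if k \<in> UNIV - {z} then c k else u + c k) = c(z := u)"
    using \<open>c z = 0\<close> by auto
  then show ?thesis
    using shift[of "UNIV - {z}"] by simp
qed

lemma alt_multilinear_case_option:
  fixes \<phi> :: "('d::finite option \<Rightarrow> 'v::real_vector) \<Rightarrow> real"
  assumes am: "alt_multilinear \<phi>"
  shows "alt_multilinear (\<lambda>us. \<phi> (\<lambda>k. case k of None \<Rightarrow> z | Some j \<Rightarrow> us j))"
  unfolding alt_multilinear_def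
proof (intro conjI allI impI)
  fix vs :: "'d \<Rightarrow> 'v" and j
  have "(\<lambda>k. case k of None \<Rightarrow> z | Some i \<Rightarrow> (vs(j := v)) i) =
      (\<lambda>k. case k of None \<Rightarrow> z | Some i \<Rightarrow> vs i)(Some j := v)" for v
    by (auto split: option.split)
  then show "linear (\<lambda>v. \<phi> (\<lambda>k. case k of None \<Rightarrow> z | Some i \<Rightarrow> (vs(j := v)) i))"
    using alt_multilinear_linear[OF am] by presburger
next
  fix vs :: "'d \<Rightarrow> 'v" and i j
  assume "i \<noteq> j \<and> vs i = vs j"
  then show "\<phi> (\<lambda>k. case k of None \<Rightarrow> z | Some j \<Rightarrow> vs j) = 0"
    by (intro alt_multilinear_eq_0[OF am, of "Some i" "Some j"]) auto
qed

lemma alt_multilinear_option_minor_expansion: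
  fixes \<phi> :: "('d::finite option \<Rightarrow> real^'n::finite) \<Rightarrow> real"
  assumes am: "alt_multilinear \<phi>"
  shows "fact CARD('d) * \<phi> (\<lambda>k. case k of None \<Rightarrow> z | Some j \<Rightarrow> u j) =
    (\<Sum>g\<in>UNIV. (\<Sum>m\<in>UNIV. z $ m * \<phi> (\<lambda>k. case k of None \<Rightarrow> axis m 1 | Some j \<Rightarrow> axis (g j) 1))
        * coordinate_minor g u)"
proof -
  have first_slot: "\<phi> (\<lambda>k. case k of None \<Rightarrow> z | Some j \<Rightarrow> v j) =
      (\<Sum>m\<in>UNIV. z $ m * \<phi> (\<lambda>k. case k of None \<Rightarrow> axis m 1 | Some j \<Rightarrow> v j))" for v
  proof -
    let ?W = "\<lambda>k. case k of None \<Rightarrow> 0 | Some j \<Rightarrow> v j"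
    have "?W(None := x) = (\<lambda>k. case k of None \<Rightarrow> x | Some j \<Rightarrow> v j)" for x
      by (auto split: option.split)
    then show ?thesis
      using alt_multilinear_update_axis_expansion[OF am, of ?W None z] by (simp only:)
  qed
  show ?thesis
    using alt_multilinear_minor_expansion[OF alt_multilinear_case_option[OF am, of z], of u]
    by (simp add: first_slot)
qed

text \<open>The summand \<open>s - L b\<close> common to all columns can be moved into column \<open>None\<close>,
  where \<open>L b\<close> then drops out, being a combination of the other columns.\<close>
lemma alt_multilinear_cone_columns:
  fixes \<phi> :: "('d::finite option \<Rightarrow> real^'n::finite) \<Rightarrow> real" and L :: "real^'d \<Rightarrow> real^'n"
  assumes am: "alt_multilinear \<phi>" and lin: "linear L"
  shows "\<phi> (\<lambda>k. s - L b + L (\<chi> i. if k = Some i then 1 else 0)) =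
         \<phi> (\<lambda>k. case k of None \<Rightarrow> s | Some j \<Rightarrow> L (axis j 1))"
proof -
  let ?c = "\<lambda>k. L (\<chi> i. if k = Some i then 1 else 0)"
  let ?W = "\<lambda>k. case k of None \<Rightarrow> s | Some j \<Rightarrow> L (axis j 1)"
  have "?c None = 0"
    using linear_0[OF lin] by (simp add: zero_vec_def[symmetric])
  moreover have "?c (Some j) = L (axis j 1)" for j
    by (simp add: axis_def eq_commute)
  ultimately have c_eq: "?c(None := x) = ?W(None := x)" for x
    by (auto split: option.split)
  have "L b = L (\<Sum>j\<in>UNIV. b $ j *\<^sub>R axis j 1)"
    using basis_expansion[of b] by (simp add: scalar_mult_eq_scaleR)
  also have "\<dots> = (\<Sum>j\<in>UNIV. b $ j *\<^sub>R ?W (Some j))"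
    by (simp add: linear_sum[OF lin] linear_scale[OF lin])
  finally have "\<phi> (?W(None := L b)) = (\<Sum>j\<in>UNIV. b $ j * \<phi> (?W(None := ?W (Some j))))"
    by (simp only: alt_multilinear_update_sum[OF am])
  then have "\<phi> (?W(None := L b)) = 0"
    by (simp add: alt_multilinear_eq_0[OF am, of None "Some _"])
  moreover have "\<phi> (\<lambda>k. s - L b + ?c k) = \<phi> (?W(None := s)) - \<phi> (?W(None := L b))"
    using alt_multilinear_add_to_all[OF am, of ?c None] \<open>?c None = 0\<close>
    by (simp add: c_eq alt_multilinear_update_diff[OF am])
  moreover have "?W(None := s) = ?W"
    by (auto split: option.split)
  ultimately show ?thesis by simp
qed

section \<open>The standard simplex\<close>

lemma inner_const_1_vec: "(\<chi> _. 1) \<bullet> x = (\<Sum>i\<in>UNIV. x $ i)"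
  by (simp add: inner_vec_def)

lemma std_simplex_halfspaces:
  "std_simplex = (\<Inter>i. {x::real^'e::finite. axis i 1 \<bullet> x \<ge> 0}) \<inter> {x. (\<chi> _. 1) \<bullet> x \<le> 1}"
  by (auto simp: std_simplex_def inner_axis' inner_const_1_vec)

lemma convex_std_simplex: "convex (std_simplex :: (real^'e::finite) set)"
  unfolding std_simplex_halfspaces by (intro convex_Int convex_INT convex_halfspace_ge convex_halfspace_le)

lemma compact_std_simplex: "compact (std_simplex :: (real^'e::finite) set)"
  unfolding compact_eq_bounded_closed
proof
  have "a $ i \<le> 1" if "a \<in> std_simplex" for a :: "real^'e" and i
  proof -
    have "a $ i \<le> (\<Sum>j\<in>UNIV. a $ j)"
      using that by (intro member_le_sum) (auto simp: std_simplex_def)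
    then show ?thesis using that by (simp add: std_simplex_def)
  qed
  then have "std_simplex \<subseteq> cbox (0::real^'e) (\<chi> _. 1)"
    by (auto simp: mem_box_cart std_simplex_def)
  then show "bounded (std_simplex :: (real^'e) set)"
    by (rule bounded_subset[OF bounded_cbox])
next
  show "closed (std_simplex :: (real^'e) set)"
    unfolding std_simplex_halfspaces by (intro closed_Int closed_INT ballI closed_halfspace_ge closed_halfspace_le)
qed

lemma interior_std_simplex:
  "interior std_simplex = {a::real^'e::finite. (\<forall>i. 0 < a $ i) \<and> (\<Sum>i\<in>UNIV. a $ i) < 1}"
proof
  show "interior std_simplex \<subseteq> {a::real^'e. (\<forall>i. 0 < a $ i) \<and> (\<Sum>i\<in>UNIV. a $ i) < 1}"
  proof
    fix a :: "real^'e" assume a: "a \<in> interior std_simplex"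
    have ones: "(\<chi> _. 1) \<noteq> (0::real^'e)"
      by (simp add: vec_eq_iff)
    have "0 < a $ i" for i
    proof -
      have "a \<in> interior {x. axis i 1 \<bullet> x \<ge> 0}"
        using a interior_mono[OF INT_lower[of i]] interior_mono[OF Int_lower1]
        unfolding std_simplex_halfspaces by blast
      then show ?thesis by (simp add: inner_axis')
    qed
    moreover have "(\<chi> _. 1) \<bullet> a < 1"
    proof -
      have "a \<in> interior {x. (\<chi> _. 1) \<bullet> x \<le> 1}"
        using a interior_mono[OF Int_lower2] unfolding std_simplex_halfspaces by blast
      then show ?thesis unfolding interior_halfspace_le[OF ones] by simp
    qed
    ultimately show "a \<in> {a::real^'e. (\<forall>i. 0 < a $ i) \<and> (\<Sum>i\<in>UNIV. a $ i) < 1}"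
      by (simp add: inner_const_1_vec)
  qed
next
  have "{a::real^'e. (\<forall>i. 0 < a $ i) \<and> (\<Sum>i\<in>UNIV. a $ i) < 1} =
      (\<Inter>i. {x. axis i 1 \<bullet> x > 0}) \<inter> {x. (\<chi> _. 1) \<bullet> x < 1}"
    by (auto simp: inner_axis' inner_const_1_vec)
  then have "open {a::real^'e. (\<forall>i. 0 < a $ i) \<and> (\<Sum>i\<in>UNIV. a $ i) < 1}"
    by (simp add: open_Int open_INT open_halfspace_gt open_halfspace_lt)
  then show "{a::real^'e. (\<forall>i. 0 < a $ i) \<and> (\<Sum>i\<in>UNIV. a $ i) < 1} \<subseteq> interior std_simplex"
    by (intro interior_maximal) (auto simp: std_simplex_def less_imp_le)
qed

lemma interior_std_simplex_nonempty: "interior (std_simplex :: (real^'e::finite) set) \<noteq> {}"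
proof -
  have "(\<chi> _. 1 / (2 * real CARD('e))) \<in> interior (std_simplex :: (real^'e) set)"
    by (simp add: interior_std_simplex)
  then show ?thesis by blast
qed

lemma C1_on_interior_std_simplex:
  assumes "C1_on_open_faces \<sigma>"
  shows "C1_on \<sigma> (interior std_simplex)"
proof -
  have "C1_on \<sigma> (rel_interior std_simplex)"
    using assms interior_std_simplex_nonempty face_of_refl[OF convex_std_simplex]
    unfolding C1_on_open_faces_def by (metis empty_subsetI interior_subset subset_antisym)
  then show ?thesis
    by (simp add: rel_interior_nonempty_interior[OF interior_std_simplex_nonempty])
qed

section \<open>Cone coordinates\<close>

definition coord_sum :: "real^'e::finite \<Rightarrow> real" where
  "coord_sum a = (\<Sum>k\<in>UNIV. a $ k)"

definition tail_coords :: "real^('d::finite option) \<Rightarrow> real^'d" where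
  "tail_coords a = (\<chi> i. a $ Some i)"

definition cone_base :: "real^('d::finite option) \<Rightarrow> real^'d" where
  "cone_base a = inverse (coord_sum a) *\<^sub>R tail_coords a"

lemma linear_coord_sum: "linear coord_sum"
  by (rule linearI) (simp_all add: coord_sum_def sum.distrib sum_distrib_left)

lemma linear_tail_coords: "linear tail_coords"
  by (rule linearI) (simp_all add: tail_coords_def vec_eq_iff)

lemma coord_sum_option: "coord_sum a = a $ None + coord_sum (tail_coords a)"
  by (simp add: coord_sum_def tail_coords_def UNIV_option_conv sum.reindex)

lemma coord_sum_axis: "coord_sum (axis k 1) = 1"
  by (simp add: coord_sum_def axis_def)

lemma tail_coords_axis: "tail_coords (axis k 1) = (\<chi> i. if k = Some i then 1 else 0)"
  by (simp add: tail_coords_def axis_def vec_eq_iff eq_commute)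

lemma simplex_cone_eq:
  assumes "coord_sum a \<noteq> 0"
  shows "simplex_cone \<sigma> a = coord_sum a *\<^sub>R \<sigma> (cone_base a)"
proof -
  have "(\<chi> i. a $ Some i / coord_sum a) = cone_base a"
    by (simp add: cone_base_def tail_coords_def vec_eq_iff field_simps)
  then show ?thesis
    using assms by (simp add: simplex_cone_def coord_sum_def)
qed

lemma cone_coords_interior:
  assumes "a \<in> interior std_simplex"
  shows "0 < coord_sum a" "coord_sum a < 1" "cone_base a \<in> interior std_simplex"
proof -
  have pos: "0 < a $ k" for k
    using assms by (simp add: interior_std_simplex)
  then have "0 \<le> coord_sum (tail_coords a)"
    by (auto simp: coord_sum_def tail_coords_def intro: sum_nonneg less_imp_le)
  then show "0 < coord_sum a"
    using pos[of None] by (simp add: coord_sum_option)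
  then have "coord_sum (cone_base a) < 1"
    using pos[of None] by (simp add: cone_base_def linear_scale[OF linear_coord_sum] coord_sum_option field_simps)
  then show "cone_base a \<in> interior std_simplex"
    using \<open>0 < coord_sum a\<close> pos by (simp add: interior_std_simplex coord_sum_def cone_base_def tail_coords_def)
  show "coord_sum a < 1"
    using assms by (simp add: interior_std_simplex coord_sum_def)
qed

lemma continuous_on_cone_base: "continuous_on (interior std_simplex) cone_base"
proof -
  have "continuous_on (interior std_simplex) (\<lambda>a. inverse (coord_sum a) *\<^sub>R tail_coords a)"
    using cone_coords_interior(1)
    by (intro continuous_intros linear_continuous_on linear_conv_bounded_linear[THEN iffD1]
        linear_coord_sum linear_tail_coords) force
  then show ?thesis
    by (simp add: cone_base_def[abs_def])
qed

lemma simplex_cone_image: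
  fixes \<sigma> :: "real^'d::finite \<Rightarrow> real^'n::finite"
  shows "simplex_cone \<sigma> ` std_simplex = (\<lambda>(t, b). t *\<^sub>R \<sigma> b) ` ({0..1} \<times> std_simplex)"
proof (intro equalityI subsetI)
  fix y assume "y \<in> simplex_cone \<sigma> ` std_simplex"
  then obtain a where a: "a \<in> std_simplex" and y: "y = simplex_cone \<sigma> a" by blast
  show "y \<in> (\<lambda>(t, b). t *\<^sub>R \<sigma> b) ` ({0..1} \<times> std_simplex)"
  proof (cases "coord_sum a = 0")
    case True
    then have "y = 0 *\<^sub>R \<sigma> 0"
      by (simp add: y simplex_cone_def coord_sum_def)
    moreover have "(0, 0) \<in> {0..1::real} \<times> (std_simplex :: (real^'d) set)"
      by (simp add: std_simplex_def)
    ultimately show ?thesis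
      by (intro rev_image_eqI[of "(0, 0)"]) auto
  next
    case False
    have "0 \<le> coord_sum a" "coord_sum a \<le> 1"
      using a by (auto simp: std_simplex_def coord_sum_def intro: sum_nonneg)
    moreover have "cone_base a \<in> std_simplex"
    proof -
      have "0 < coord_sum a"
        using False \<open>0 \<le> coord_sum a\<close> by simp
      moreover have "coord_sum (tail_coords a) \<le> coord_sum a"
        using a by (simp add: coord_sum_option std_simplex_def)
      ultimately have "coord_sum (cone_base a) \<le> 1"
        by (simp add: cone_base_def linear_scale[OF linear_coord_sum] field_simps)
      then show ?thesis
        using a \<open>0 < coord_sum a\<close>
        by (simp add: std_simplex_def coord_sum_def cone_base_def tail_coords_def)
    qed
    ultimately show ?thesis
      using False by (auto simp: y simplex_cone_eq intro!: rev_image_eqI[of "(coord_sum a, cone_base a)"])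
  qed
next
  fix y assume "y \<in> (\<lambda>(t, b). t *\<^sub>R \<sigma> b) ` ({0..1} \<times> std_simplex)"
  then obtain t b where t: "0 \<le> t" "t \<le> 1" and b: "b \<in> std_simplex" and y: "y = t *\<^sub>R \<sigma> b"
    by auto
  show "y \<in> simplex_cone \<sigma> ` std_simplex"
  proof (cases "t = 0")
    case True
    then have "y = simplex_cone \<sigma> 0"
      by (simp add: y simplex_cone_def)
    moreover have "(0 :: real^('d option)) \<in> std_simplex"
      by (simp add: std_simplex_def)
    ultimately show ?thesis by blast
  next
    case False
    define a :: "real^('d option)"
      where "a = (\<chi> k. case k of None \<Rightarrow> t * (1 - coord_sum b) | Some i \<Rightarrow> t * b $ i)"
    have "tail_coords a = t *\<^sub>R b"
      by (simp add: a_def tail_coords_def vec_eq_iff)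
    then have sum_a: "coord_sum a = t"
      by (simp add: coord_sum_option a_def linear_scale[OF linear_coord_sum] algebra_simps)
    have "a \<in> std_simplex"
      using t b sum_a
      by (auto simp: std_simplex_def a_def coord_sum_def split: option.split)
    moreover have "simplex_cone \<sigma> a = y"
      using False \<open>tail_coords a = t *\<^sub>R b\<close> by (simp add: simplex_cone_eq sum_a cone_base_def y)
    ultimately show ?thesis by blast
  qed
qed

lemma compact_simplex_cone_image:
  assumes "continuous_on std_simplex \<sigma>"
  shows "compact (simplex_cone \<sigma> ` std_simplex)"
  unfolding simplex_cone_image
proof (intro compact_continuous_image compact_Times compact_Icc compact_std_simplex)
  have "continuous_on ({0..1::real} \<times> std_simplex) (\<lambda>p. \<sigma> (snd p))"
    by (rule continuous_on_compose2[OF assms continuous_on_snd]) auto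
  then show "continuous_on ({0..1::real} \<times> std_simplex) (\<lambda>(t, b). t *\<^sub>R \<sigma> b)"
    by (simp add: case_prod_beta' continuous_intros)
qed

lemma has_derivative_simplex_cone:
  fixes \<sigma> :: "real^'d::finite \<Rightarrow> real^'n::finite"
  assumes a: "a \<in> interior std_simplex" and D: "(\<sigma> has_derivative L) (at (cone_base a))"
  shows "(simplex_cone \<sigma> has_derivative
           (\<lambda>h. coord_sum h *\<^sub>R \<sigma> (cone_base a) + L (tail_coords h - coord_sum h *\<^sub>R cone_base a))) (at a)"
proof -
  let ?A = "coord_sum a"
  have "?A \<noteq> 0"
    using cone_coords_interior(1)[OF a] by simp
  have lin: "linear L"
    using D by (rule has_derivative_linear)
  have sum: "(coord_sum has_derivative coord_sum) (at a)"
    and tail: "(tail_coords has_derivative tail_coords) (at a)"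
    by (simp_all add: linear_imp_has_derivative linear_coord_sum linear_tail_coords)
  have "(cone_base has_derivative
      (\<lambda>h. inverse ?A *\<^sub>R tail_coords h + (- (inverse ?A * coord_sum h * inverse ?A)) *\<^sub>R tail_coords a)) (at a)"
    unfolding cone_base_def[abs_def]
    by (rule has_derivative_scaleR[OF Deriv.has_derivative_inverse[OF \<open>?A \<noteq> 0\<close> sum] tail])
  then have "(cone_base has_derivative (\<lambda>h. inverse ?A *\<^sub>R (tail_coords h - coord_sum h *\<^sub>R cone_base a))) (at a)"
    by (rule has_derivative_eq_rhs) (auto simp: fun_eq_iff cone_base_def algebra_simps)
  from diff_chain_at[OF this D]
  have "((\<lambda>x. coord_sum x *\<^sub>R \<sigma> (cone_base x)) has_derivative
      (\<lambda>h. ?A *\<^sub>R L (inverse ?A *\<^sub>R (tail_coords h - coord_sum h *\<^sub>R cone_base a)) + coord_sum h *\<^sub>R \<sigma> (cone_base a))) (at a)"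
    using has_derivative_scaleR[OF sum] by (simp add: o_def)
  then have "((\<lambda>x. coord_sum x *\<^sub>R \<sigma> (cone_base x)) has_derivative
      (\<lambda>h. coord_sum h *\<^sub>R \<sigma> (cone_base a) + L (tail_coords h - coord_sum h *\<^sub>R cone_base a))) (at a)"
    by (rule has_derivative_eq_rhs) (simp add: fun_eq_iff linear_scale[OF lin] \<open>?A \<noteq> 0\<close>)
  then show ?thesis
  proof (rule has_derivative_transform_within_open[OF _ open_interior a])
    fix x :: "real^('d option)" assume "x \<in> interior std_simplex"
    then show "coord_sum x *\<^sub>R \<sigma> (cone_base x) = simplex_cone \<sigma> x"
      using cone_coords_interior(1)[of x] by (simp add: simplex_cone_eq)
  qed
qed

lemma pullback_density_simplex_cone:
  fixes \<sigma> :: "real^'d::finite \<Rightarrow> real^'n::finite"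
  assumes a: "a \<in> interior std_simplex" and "\<sigma> differentiable at (cone_base a)"
    and am: "alt_multilinear (w (simplex_cone \<sigma> a))"
  shows "pullback_density (simplex_cone \<sigma>) w a = inverse (fact CARD('d)) *\<^sub>R
    (\<Sum>g\<in>UNIV. \<Sum>m\<in>UNIV. \<sigma> (cone_base a) $ m *
      (w (simplex_cone \<sigma> a) (\<lambda>k. case k of None \<Rightarrow> axis m 1 | Some j \<Rightarrow> axis (g j) 1) *
       pullback_density \<sigma> (\<lambda>_. coordinate_minor g) (cone_base a)))"
proof -
  let ?b = "cone_base a" and ?L = "frechet_derivative \<sigma> (at (cone_base a))"
  have D: "(\<sigma> has_derivative ?L) (at ?b)"
    using \<open>\<sigma> differentiable at ?b\<close> by (simp add: frechet_derivative_works)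
  have lin: "linear ?L"
    using D by (rule has_derivative_linear)
  have "frechet_derivative (simplex_cone \<sigma>) (at a) (axis k 1) =
      \<sigma> ?b - ?L ?b + ?L (\<chi> i. if k = Some i then 1 else 0)" for k
    unfolding frechet_derivative_at[OF has_derivative_simplex_cone[OF a D], symmetric]
    by (simp add: coord_sum_axis tail_coords_axis linear_diff[OF lin])
  then have "pullback_density (simplex_cone \<sigma>) w a =
      w (simplex_cone \<sigma> a) (\<lambda>k. case k of None \<Rightarrow> \<sigma> ?b | Some j \<Rightarrow> ?L (axis j 1))"
    unfolding pullback_density_def by (simp add: alt_multilinear_cone_columns[OF am lin])
  then have "fact CARD('d) * pullback_density (simplex_cone \<sigma>) w a =
      (\<Sum>g\<in>UNIV. (\<Sum>m\<in>UNIV. \<sigma> ?b $ m *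
        w (simplex_cone \<sigma> a) (\<lambda>k. case k of None \<Rightarrow> axis m 1 | Some j \<Rightarrow> axis (g j) 1))
        * pullback_density \<sigma> (\<lambda>_. coordinate_minor g) ?b)"
    by (simp add: alt_multilinear_option_minor_expansion[OF am] pullback_density_def)
  also have "\<dots> = (\<Sum>g\<in>UNIV. \<Sum>m\<in>UNIV. \<sigma> ?b $ m *
      (w (simplex_cone \<sigma> a) (\<lambda>k. case k of None \<Rightarrow> axis m 1 | Some j \<Rightarrow> axis (g j) 1) *
       pullback_density \<sigma> (\<lambda>_. coordinate_minor g) ?b))"
    by (simp add: sum_distrib_right mult.assoc)
  finally show ?thesis
    by (simp add: field_simps)
qed

section \<open>Integrability over the cone\<close>

definition vec_option_of_pair :: "real \<times> (real^'d) \<Rightarrow> real^('d::finite option)" where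
  "vec_option_of_pair p = (\<chi> k. case k of None \<Rightarrow> fst p | Some i \<Rightarrow> snd p $ i)"

lemma vec_option_of_pair_measurable [measurable]:
  "(vec_option_of_pair :: real \<times> (real^'d::finite) \<Rightarrow> real^('d option)) \<in> borel_measurable borel"
proof -
  have "linear (vec_option_of_pair :: real \<times> (real^'d) \<Rightarrow> real^('d option))"
    by (rule linearI) (auto simp: vec_option_of_pair_def vec_eq_iff split: option.split)
  then show ?thesis
    by (intro borel_measurable_continuous_onI linear_continuous_on linear_conv_bounded_linear[THEN iffD1])
qed

lemma prod_Basis_vec: "(\<Prod>b\<in>(Basis :: (real^'m::finite) set). f b) = (\<Prod>k\<in>UNIV. f (axis k 1))"
proof -
  have Basis: "(Basis :: (real^'m) set) = range (\<lambda>k. axis k 1)"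
    by (auto simp: Basis_vec_def)
  have "inj (\<lambda>k::'m. axis k (1::real))"
    by (auto intro!: injI simp: axis_eq_axis)
  then show ?thesis
    unfolding Basis by (simp add: prod.reindex)
qed

lemma distr_vec_option_of_pair_lborel:
  "distr lborel borel vec_option_of_pair = (lborel :: (real^('d::finite option)) measure)"
proof (rule lborel_eqI[symmetric])
  fix l u :: "real^('d option)"
  assume le: "\<And>b. b \<in> Basis \<Longrightarrow> l \<bullet> b \<le> u \<bullet> b"
  have lu: "l $ k \<le> u $ k" for k
    using le[of "axis k 1"] by (auto simp: Basis_vec_def inner_axis)
  let ?l' = "(\<chi> i. l $ Some i) :: real^'d" and ?u' = "(\<chi> i. u $ Some i) :: real^'d"
  have "\<forall>b\<in>Basis. ?l' \<bullet> b \<le> ?u' \<bullet> b"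
    using lu by (auto simp: Basis_vec_def inner_axis)
  have "vec_option_of_pair -` box l u = box (l $ None) (u $ None) \<times> box ?l' ?u'"
    by (auto simp: mem_box_cart vec_option_of_pair_def split_option_all)
  then have "emeasure (distr lborel borel vec_option_of_pair) (box l u) =
      emeasure (lborel \<Otimes>\<^sub>M lborel) (box (l $ None) (u $ None) \<times> box ?l' ?u')"
    by (simp add: emeasure_distr lborel_prod)
  also have "\<dots> = ennreal (u $ None - l $ None) * ennreal (\<Prod>i\<in>UNIV. u $ Some i - l $ Some i)"
    using lu \<open>\<forall>b\<in>Basis. ?l' \<bullet> b \<le> ?u' \<bullet> b\<close>
    by (simp add: lborel.emeasure_pair_measure_Times emeasure_lborel_box_eq prod_Basis_vec inner_axis)
  also have "\<dots> = (\<Prod>b\<in>Basis. (u - l) \<bullet> b)"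
    using lu by (simp add: prod_Basis_vec inner_axis UNIV_option_conv prod.reindex ennreal_mult prod_nonneg)
  finally show "emeasure (distr lborel borel vec_option_of_pair) (box l u) = (\<Prod>b\<in>Basis. (u - l) \<bullet> b)" .
qed simp

lemma absolutely_integrable_on_open_iff_nn_integral:
  fixes f :: "'a::euclidean_space \<Rightarrow> real"
  assumes "open S" and "continuous_on S f"
  shows "f absolutely_integrable_on S \<longleftrightarrow> (\<integral>\<^sup>+x. ennreal (indicator S x * \<bar>f x\<bar>) \<partial>lborel) < \<infinity>"
proof -
  have m: "(\<lambda>x. indicator S x *\<^sub>R f x) \<in> borel_measurable borel"
    using assms by (intro borel_measurable_continuous_on_indicator borel_open)
  have "f absolutely_integrable_on S \<longleftrightarrow> integrable lborel (\<lambda>x. indicator S x *\<^sub>R f x)"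
    unfolding set_integrable_def by (rule integrable_completion) (use m in simp)
  also have "\<dots> \<longleftrightarrow> (\<integral>\<^sup>+x. ennreal (norm (indicator S x *\<^sub>R f x)) \<partial>lborel) < \<infinity>"
    using m by (simp add: integrable_iff_bounded)
  also have "(\<lambda>x. ennreal (norm (indicator S x *\<^sub>R f x))) = (\<lambda>x. ennreal (indicator S x * \<bar>f x\<bar>))"
    by (auto simp: indicator_def fun_eq_iff)
  finally show ?thesis .
qed

lemma nn_integral_lborel_dilation_le:
  fixes H :: "'a::euclidean_space \<Rightarrow> real"
  assumes [measurable]: "H \<in> borel_measurable borel" and "0 < s" "s \<le> 1"
  shows "(\<integral>\<^sup>+x. ennreal (H (inverse s *\<^sub>R x)) \<partial>lborel) \<le> (\<integral>\<^sup>+x. ennreal (H x) \<partial>lborel)"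
proof -
  have "(\<integral>\<^sup>+x. ennreal (H (inverse s *\<^sub>R x)) \<partial>lborel) \<le>
      (\<integral>\<^sup>+x. ennreal (\<bar>inverse s\<bar> ^ DIM('a)) * ennreal (H (inverse s *\<^sub>R x)) \<partial>lborel)"
  proof (rule nn_integral_mono)
    have "1 \<le> \<bar>inverse s\<bar> ^ DIM('a)"
      using assms(2,3) by (intro one_le_power) (simp add: one_le_inverse)
    then show "ennreal (H (inverse s *\<^sub>R x)) \<le> ennreal (\<bar>inverse s\<bar> ^ DIM('a)) * ennreal (H (inverse s *\<^sub>R x))" for x
      using mult_right_mono[of 1 "ennreal (\<bar>inverse s\<bar> ^ DIM('a))" "ennreal (H (inverse s *\<^sub>R x))"]
      by simp
  qed
  also have "\<dots> = (\<integral>\<^sup>+x. ennreal (H x) \<partial>lborel)"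
    using assms(2)
    by (subst lborel_affine[of "inverse s" 0]) (simp_all add: nn_integral_density nn_integral_distr)
  finally show ?thesis .
qed

lemma indicator_cone_base_vec_option_of_pair:
  fixes h :: "real^'d::finite \<Rightarrow> real"
  shows "indicator (interior std_simplex) (vec_option_of_pair (s - coord_sum c, c)) *
      \<bar>h (cone_base (vec_option_of_pair (s - coord_sum c, c)))\<bar> =
    indicator {0<..<1} s * (indicator (interior std_simplex) (inverse s *\<^sub>R c) * \<bar>h (inverse s *\<^sub>R c)\<bar>)"
proof -
  let ?a = "vec_option_of_pair (s - coord_sum c, c)"
  have tail: "tail_coords ?a = c"
    by (simp add: tail_coords_def vec_option_of_pair_def)
  then have sum: "coord_sum ?a = s"
    by (simp add: coord_sum_option vec_option_of_pair_def)
  show ?thesis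
  proof (cases "0 < s \<and> s < 1")
    case True
    have "?a \<in> interior std_simplex \<longleftrightarrow> (\<forall>k. 0 < ?a $ k) \<and> coord_sum ?a < 1"
      by (simp add: interior_std_simplex coord_sum_def)
    also have "\<dots> \<longleftrightarrow> (\<forall>i. 0 < c $ i) \<and> coord_sum c < s"
      unfolding sum using True by (auto simp: vec_option_of_pair_def split_option_all)
    also have "\<dots> \<longleftrightarrow> inverse s *\<^sub>R c \<in> interior std_simplex"
      using True
      by (simp add: interior_std_simplex coord_sum_def[symmetric] linear_scale[OF linear_coord_sum]
          zero_less_mult_iff field_simps)
    finally show ?thesis
      using True by (simp add: cone_base_def tail sum indicator_def)
  next
    case False
    then have "?a \<notin> interior std_simplex"
      using cone_coords_interior(1,2)[of ?a] sum by auto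
    then show ?thesis
      using False by (simp add: indicator_def)
  qed
qed

text \<open>Writing \<open>a = (s - \<Sum>c, c)\<close> (a shear) and then \<open>c = s b\<close>, the integral of
  \<open>\<bar>h (cone_base a)\<bar>\<close> over the open \<open>(d+1)\<close>-simplex becomes
  \<open>\<integral>\<^sub>0\<^sup>1 s\<^sup>d \<integral> \<bar>h b\<bar> db ds\<close>.\<close>
lemma absolutely_integrable_on_cone_base:
  fixes h :: "real^'d::finite \<Rightarrow> real"
  assumes h_int: "h absolutely_integrable_on interior std_simplex"
    and h_cont: "continuous_on (interior std_simplex) h"
  shows "(\<lambda>a. h (cone_base a)) absolutely_integrable_on (interior std_simplex :: (real^('d option)) set)"
proof -
  define H where "H b = indicator (interior std_simplex) b * \<bar>h b\<bar>" for b :: "real^'d"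
  define G where "G a = indicator (interior std_simplex) a * \<bar>h (cone_base a)\<bar>" for a :: "real^('d option)"
  have hcb_cont: "continuous_on (interior std_simplex) (\<lambda>a. h (cone_base a))"
    using cone_coords_interior(3)
    by (intro continuous_on_compose2[OF h_cont continuous_on_cone_base]) auto
  have [measurable]: "H \<in> borel_measurable borel"
    unfolding H_def[abs_def] real_scaleR_def[symmetric]
    by (intro borel_measurable_continuous_on_indicator borel_open open_interior continuous_intros h_cont)
  have [measurable]: "G \<in> borel_measurable borel"
    unfolding G_def[abs_def] real_scaleR_def[symmetric]
    by (intro borel_measurable_continuous_on_indicator borel_open open_interior continuous_intros hcb_cont)
  have "(\<integral>\<^sup>+a. G a \<partial>lborel) = (\<integral>\<^sup>+p. G (vec_option_of_pair p) \<partial>(lborel \<Otimes>\<^sub>M lborel))"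
    by (simp add: distr_vec_option_of_pair_lborel[symmetric] nn_integral_distr lborel_prod)
  also have "\<dots> = (\<integral>\<^sup>+c. \<integral>\<^sup>+t. G (vec_option_of_pair (t, c)) \<partial>lborel \<partial>lborel)"
    by (rule lborel_pair.nn_integral_snd[symmetric]) (simp add: lborel_prod)
  also have "\<dots> = (\<integral>\<^sup>+c. \<integral>\<^sup>+s. indicator {0<..<1} s * H (inverse s *\<^sub>R c) \<partial>lborel \<partial>lborel)"
  proof (rule nn_integral_cong)
    fix c :: "real^'d"
    have "(\<integral>\<^sup>+t. G (vec_option_of_pair (t, c)) \<partial>lborel) =
        (\<integral>\<^sup>+s. G (vec_option_of_pair (- coord_sum c + 1 * s, c)) \<partial>lborel)"
      by (subst nn_integral_real_affine[of _ 1 "- coord_sum c"]) simp_all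
    then show "(\<integral>\<^sup>+t. G (vec_option_of_pair (t, c)) \<partial>lborel) =
        (\<integral>\<^sup>+s. indicator {0<..<1} s * H (inverse s *\<^sub>R c) \<partial>lborel)"
      by (simp add: G_def H_def indicator_cone_base_vec_option_of_pair[of _ c, symmetric])
  qed
  also have "\<dots> = (\<integral>\<^sup>+s. \<integral>\<^sup>+c. indicator {0<..<1} s * H (inverse s *\<^sub>R c) \<partial>lborel \<partial>lborel)"
    by (rule lborel_pair.Fubini') measurable
  also have "\<dots> \<le> (\<integral>\<^sup>+s. indicator {0<..<1::real} s * (\<integral>\<^sup>+b. H b \<partial>lborel) \<partial>lborel)"
  proof (rule nn_integral_mono)
    fix s :: real
    show "(\<integral>\<^sup>+c. indicator {0<..<1} s * H (inverse s *\<^sub>R c) \<partial>lborel) \<le>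
        indicator {0<..<1} s * (\<integral>\<^sup>+b. H b \<partial>lborel)"
      using nn_integral_lborel_dilation_le[of H s] by (simp add: indicator_def)
  qed
  also have "\<dots> = emeasure lborel {0<..<1::real} * (\<integral>\<^sup>+b. H b \<partial>lborel)"
    by (simp add: nn_integral_multc nn_integral_indicator)
  also have "\<dots> < \<infinity>"
    using h_int absolutely_integrable_on_open_iff_nn_integral[OF open_interior h_cont]
    by (simp add: H_def ennreal_mult_less_top)
  finally show ?thesis
    using absolutely_integrable_on_open_iff_nn_integral[OF open_interior hcb_cont] by (simp add: G_def)
qed

section \<open>Finite volume of the cone\<close>

lemma C1_on_open_imp_has_derivative:
  assumes "C1_on f S" and "open S"
  obtains D where "\<And>x. x \<in> S \<Longrightarrow> (f has_derivative blinfun_apply (D x)) (at x)" and "continuous_on S D"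
  using assms at_within_open unfolding C1_on_def by metis

lemma C1_on_open_imp_differentiable:
  assumes "C1_on f S" and "open S" and "x \<in> S"
  shows "f differentiable at x"
  using C1_on_open_imp_has_derivative[OF assms(1,2)] assms(3) unfolding differentiable_def by metis

lemma continuous_on_pullback_coordinate_minor:
  fixes \<sigma> :: "real^'d::finite \<Rightarrow> real^'n::finite"
  assumes "C1_on \<sigma> S" and "open S"
  shows "continuous_on S (pullback_density \<sigma> (\<lambda>_. coordinate_minor g))"
proof -
  obtain D where D: "\<And>x. x \<in> S \<Longrightarrow> (\<sigma> has_derivative blinfun_apply (D x)) (at x)"
    and "continuous_on S D"
    using C1_on_open_imp_has_derivative[OF assms] by blast
  have "continuous_on S (\<lambda>x. det (\<chi> k j. D x (axis k 1) $ g j))"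
    unfolding det_def using \<open>continuous_on S D\<close> by (intro continuous_intros) auto
  moreover have "pullback_density \<sigma> (\<lambda>_. coordinate_minor g) x = det (\<chi> k j. D x (axis k 1) $ g j)"
    if "x \<in> S" for x
    using frechet_derivative_at[OF D[OF that]]
    by (simp add: pullback_density_def coordinate_minor_def)
  ultimately show ?thesis
    using continuous_on_cong by force
qed

lemma finite_volume_imp_integrable_coordinate_minor:
  assumes "finite_volume \<sigma>"
  shows "pullback_density \<sigma> (\<lambda>_. coordinate_minor g) absolutely_integrable_on interior std_simplex"
proof -
  have "continuous_form (\<sigma> ` std_simplex) (\<lambda>_. coordinate_minor g)"
    by (simp add: continuous_form_def alt_multilinear_coordinate_minor)
  then show ?thesis
    using assms unfolding finite_volume_def by blast
qed

lemma absolutely_integrable_bounded_continuous_mult: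
  fixes f g :: "'a::euclidean_space \<Rightarrow> real"
  assumes "open S" and "continuous_on S f" and "bounded (f ` S)" and "g absolutely_integrable_on S"
  shows "(\<lambda>x. f x * g x) absolutely_integrable_on S"
proof -
  have "S \<in> sets lebesgue"
    using assms(1) by (simp add: borel_open sets_completionI_sets)
  then show ?thesis
    using assms(2-)
    by (intro absolutely_integrable_bounded_measurable_product[OF bilinear_times]
        continuous_imp_measurable_on_sets_lebesgue)
qed

lemma cone_base_component_bounded_continuous:
  fixes \<sigma> :: "real^'d::finite \<Rightarrow> real^'n::finite"
  assumes "continuous_on std_simplex \<sigma>"
  shows "continuous_on (interior std_simplex) (\<lambda>a. \<sigma> (cone_base a) $ m)"
    and "bounded ((\<lambda>a. \<sigma> (cone_base a) $ m) ` interior std_simplex)"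
proof -
  have base: "cone_base ` interior std_simplex \<subseteq> std_simplex"
    using cone_coords_interior(3) interior_subset by blast
  show "continuous_on (interior std_simplex) (\<lambda>a. \<sigma> (cone_base a) $ m)"
    using base by (intro continuous_intros continuous_on_compose2[OF assms continuous_on_cone_base]) auto
  have "bounded ((\<lambda>y. y $ m) ` \<sigma> ` std_simplex)"
    by (intro bounded_component_cart compact_imp_bounded compact_continuous_image assms compact_std_simplex)
  then show "bounded ((\<lambda>a. \<sigma> (cone_base a) $ m) ` interior std_simplex)"
    by (rule bounded_subset) (use base in auto)
qed

lemma cone_form_bounded_continuous:
  fixes \<sigma> :: "real^'d::finite \<Rightarrow> real^'n::finite"
  assumes \<sigma>: "continuous_on std_simplex \<sigma>" and w: "continuous_form (simplex_cone \<sigma> ` std_simplex) w"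
  shows "continuous_on (interior std_simplex) (\<lambda>a. w (simplex_cone \<sigma> a) vs)"
    and "bounded ((\<lambda>a. w (simplex_cone \<sigma> a) vs) ` interior std_simplex)"
proof -
  have w_cont: "continuous_on (simplex_cone \<sigma> ` std_simplex) (\<lambda>y. w y vs)"
    using w by (simp add: continuous_form_def)
  have "continuous_on (interior std_simplex) coord_sum"
    by (intro linear_continuous_on linear_conv_bounded_linear[THEN iffD1] linear_coord_sum)
  moreover have "continuous_on (interior std_simplex) (\<lambda>a. \<sigma> (cone_base a))"
    using cone_coords_interior(3) interior_subset
    by (intro continuous_on_compose2[OF \<sigma> continuous_on_cone_base]) auto
  ultimately have "continuous_on (interior std_simplex) (\<lambda>a. coord_sum a *\<^sub>R \<sigma> (cone_base a))"
    by (rule continuous_on_scaleR)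
  then have "continuous_on (interior std_simplex) (simplex_cone \<sigma>)"
    by (rule continuous_on_eq) (metis cone_coords_interior(1) less_irrefl simplex_cone_eq)
  then show "continuous_on (interior std_simplex) (\<lambda>a. w (simplex_cone \<sigma> a) vs)"
    using interior_subset by (intro continuous_on_compose2[OF w_cont]) auto
  have "bounded ((\<lambda>y. w y vs) ` simplex_cone \<sigma> ` std_simplex)"
    by (intro compact_imp_bounded compact_continuous_image w_cont compact_simplex_cone_image \<sigma>)
  then show "bounded ((\<lambda>a. w (simplex_cone \<sigma> a) vs) ` interior std_simplex)"
    by (rule bounded_subset) (use interior_subset in auto)
qed

theorem proposition2p7:
  fixes \<sigma> :: "real ^ 'd::finite \<Rightarrow> real ^ 'n::finite"
  assumes "continuous_on std_simplex \<sigma>"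
    and "C1_on_open_faces \<sigma>"
    and "finite_volume \<sigma>"
  shows "finite_volume (simplex_cone \<sigma>)"
  unfolding finite_volume_def
proof (intro allI impI)
  fix w :: "real^'n \<Rightarrow> ('d option \<Rightarrow> real^'n) \<Rightarrow> real"
  assume w: "continuous_form (simplex_cone \<sigma> ` std_simplex) w"
  let ?E = "\<lambda>m g. \<lambda>k. case k of None \<Rightarrow> axis m 1 | Some j \<Rightarrow> axis (g j) (1::real)"
  let ?M = "\<lambda>g a. pullback_density \<sigma> (\<lambda>_. coordinate_minor g) (cone_base a)"
  have C1: "C1_on \<sigma> (interior std_simplex)"
    using assms(2) by (rule C1_on_interior_std_simplex)
  have "?M g absolutely_integrable_on interior std_simplex" for g
    using absolutely_integrable_on_cone_base finite_volume_imp_integrable_coordinate_minor[OF assms(3)]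
      continuous_on_pullback_coordinate_minor[OF C1 open_interior] by blast
  then have integrable: "(\<lambda>a. inverse (fact CARD('d)) *\<^sub>R
      (\<Sum>g\<in>UNIV. \<Sum>m\<in>UNIV. \<sigma> (cone_base a) $ m * (w (simplex_cone \<sigma> a) (?E m g) * ?M g a)))
      absolutely_integrable_on interior std_simplex"
    by (intro absolutely_integrable_scaleR_left absolutely_integrable_sum finite_class.finite_UNIV
        absolutely_integrable_bounded_continuous_mult[OF open_interior]
        cone_base_component_bounded_continuous[OF assms(1)] cone_form_bounded_continuous[OF assms(1) w])
  have "pullback_density (simplex_cone \<sigma>) w a = inverse (fact CARD('d)) *\<^sub>R
      (\<Sum>g\<in>UNIV. \<Sum>m\<in>UNIV. \<sigma> (cone_base a) $ m * (w (simplex_cone \<sigma> a) (?E m g) * ?M g a))"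
    if "a \<in> interior std_simplex" for a
    using that w interior_subset cone_coords_interior(3)[OF that]
    by (intro pullback_density_simplex_cone C1_on_open_imp_differentiable[OF C1 open_interior])
       (auto simp: continuous_form_def)
  then show "pullback_density (simplex_cone \<sigma>) w absolutely_integrable_on interior std_simplex"
    by (intro absolutely_integrable_spike[OF integrable negligible_empty]) simp
qed

end
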